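(* Let $n\ge2$, $m,m'\in\mathbb{Z}$ with $\gcd(n,m)=1$ and $\gcd(n,m+m')=1$. Then, as rational functions of $s$, $$(1-s)\,\zeta(s,\sigma_{n,m+m'};\beta_{n,q})=(1-q^{m'}s)\,\zeta(q^{m'}s,\sigma_{n,m};\beta_{n,q}).$$
   Context: $\sigma_{n,m}:=(\sigma_1\cdots\sigma_{n-1})^m\in\mathrm{B}_n$ (braid group with standard generators $\sigma_i$). The Burau representation $\beta_{n,q}$ is given by $\beta_{n,q}(\sigma_i)=I_{i-1}\oplus\begin{pmatrix}1-q&1\\ q&0\end{pmatrix}\oplus I_{n-i-1}$ over $\mathbb{Z}[q^{\pm1}]$, and $\zeta(s,\sigma;\beta_{n,q}):=\det(I_n-\beta_{n,q}(\sigma)s)^{-1}$. *)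

theory Defs
  imports "Jordan_Normal_Form.Determinant" "HOL-Computational_Algebra.Polynomial_Factorial"
begin

text \<open>Coefficient field: Q(q) = fraction field of Z[q], which contains Z[q, q^-1].
  The formal variable q is the class of the polynomial X.\<close>
type_synonym coeff = "int poly fract"

definition burau_q :: coeff where
  "burau_q = to_fract [:0, 1:]"

text \<open>Burau matrix of the standard generator sigma_i (1 \<le> i \<le> n-1), rows/columns 0-indexed:
  the 2x2 block [[1-q,1],[q,0]] sits at rows/cols i-1, i.\<close>
definition burau_gen :: "nat \<Rightarrow> 'a::field \<Rightarrow> nat \<Rightarrow> 'a mat" where
  "burau_gen n q i = mat n n (\<lambda>(r, c).
     if r = i - 1 \<and> c = i - 1 then 1 - q
     else if r = i - 1 \<and> c = i then 1
     else if r = i \<and> c = i - 1 then q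
     else if r = i \<and> c = i then 0
     else if r = c then 1 else 0)"

definition burau_gen_inv :: "nat \<Rightarrow> 'a::field \<Rightarrow> nat \<Rightarrow> 'a mat" where
  "burau_gen_inv n q i = mat n n (\<lambda>(r, c).
     if r = i - 1 \<and> c = i - 1 then 0
     else if r = i - 1 \<and> c = i then inverse q
     else if r = i \<and> c = i - 1 then 1
     else if r = i \<and> c = i then 1 - inverse q
     else if r = c then 1 else 0)"

text \<open>beta(sigma_1 ... sigma_{n-1}) and beta((sigma_1 ... sigma_{n-1})^{-1})
  = beta(sigma_{n-1}^{-1} ... sigma_1^{-1}).\<close>
definition burau_delta :: "nat \<Rightarrow> 'a::field \<Rightarrow> 'a mat" where
  "burau_delta n q = foldr (\<lambda>i A. burau_gen n q i * A) [1..<n] (1\<^sub>m n)"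

definition burau_delta_inv :: "nat \<Rightarrow> 'a::field \<Rightarrow> 'a mat" where
  "burau_delta_inv n q = foldr (\<lambda>i A. burau_gen_inv n q i * A) (rev [1..<n]) (1\<^sub>m n)"

text \<open>beta_{n,q}(sigma_{n,m}) for m an integer, sigma_{n,m} = (sigma_1 ... sigma_{n-1})^m.\<close>
definition burau_sigma :: "nat \<Rightarrow> int \<Rightarrow> 'a::field \<Rightarrow> 'a mat" where
  "burau_sigma n m q =
     (if 0 \<le> m then burau_delta n q ^\<^sub>m nat m else burau_delta_inv n q ^\<^sub>m nat (- m))"

text \<open>zeta(c s, sigma_{n,m}; beta_{n,q}) = det(I_n - beta(sigma_{n,m}) (c s))^{-1},
  as an element of the field of rational functions in s over the coefficient field
  (s is the polynomial variable). With c = 1 this is zeta(s, sigma_{n,m}; beta_{n,q}).\<close>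
definition burau_zeta :: "nat \<Rightarrow> int \<Rightarrow> 'a::field \<Rightarrow> 'a \<Rightarrow> 'a poly fract" where
  "burau_zeta n m q c =
     inverse (to_fract (det (1\<^sub>m n - map_mat (\<lambda>x. [:0, c * x:]) (burau_sigma n m q))))"

end

theory Submission
  imports Defs "HOL-Number_Theory.Cong"
begin

text \<open>The Burau matrix of \<open>\<sigma>\<^sub>n\<^sub>,\<^sub>m\<close> has the shape \<open>B = q\<^sup>m P\<^sup>m + u \<one>\<^sup>T\<close>, with \<open>P\<close> the
  cyclic permutation matrix and all column sums of \<open>B\<close> equal to \<open>1\<close>: this holds for
  \<open>\<beta>(\<sigma>\<^sub>1 \<cdots> \<sigma>\<^sub>n\<^sub>-\<^sub>1)\<close> and its inverse and is preserved by products. Hence \<open>I - c s B\<close> differs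
  from \<open>I - c q\<^sup>m s P\<^sup>m\<close> by a rank-one matrix, both have constant column sums, and the matrix
  determinant lemma gives \<open>(1 - c q\<^sup>m s) det (I - c s B) = (1 - c s) det (I - c q\<^sup>m s P\<^sup>m)\<close>.
  For \<open>m\<close> coprime to \<open>n\<close>, relabelling \<open>i \<mapsto> m i mod n\<close> conjugates \<open>P\<^sup>m\<close> to \<open>P\<close>, so the
  right-hand determinant only depends on \<open>c q\<^sup>m\<close>. Taking \<open>c = 1\<close> for \<open>m + m'\<close> and
  \<open>c = q^m'\<close> for \<open>m\<close> gives \<open>c q\<^sup>m = q^(m + m')\<close> in both cases, and the two identities combine
  to the claim.\<close>

section \<open>Determinants of rank-one perturbations\<close>

lemma index_mult_mat_sum:
  assumes "A \<in> carrier_mat nr n" "B \<in> carrier_mat n nc" "i < nr" "j < nc"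
  shows "(A * B) $$ (i, j) = (\<Sum>t<n. A $$ (i, t) * B $$ (t, j))"
  using assms by (simp add: scalar_prod_def lessThan_atLeast0)

lemma sum_column_mult_mat:
  assumes A: "A \<in> carrier_mat n n" and B: "B \<in> carrier_mat n n" and j: "j < n"
    and colsum: "\<And>t. t < n \<Longrightarrow> (\<Sum>i<n. A $$ (i, t)) = c"
  shows "(\<Sum>i<n. (A * B) $$ (i, j)) = c * (\<Sum>t<n. B $$ (t, j))"
proof -
  have "(\<Sum>i<n. (A * B) $$ (i, j)) = (\<Sum>i<n. \<Sum>t<n. A $$ (i, t) * B $$ (t, j))"
    using index_mult_mat_sum[OF A B _ j] by simp
  also have "\<dots> = (\<Sum>t<n. (\<Sum>i<n. A $$ (i, t)) * B $$ (t, j))"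
    by (subst sum.swap) (simp add: sum_distrib_right)
  finally show ?thesis using colsum by (simp add: sum_distrib_left)
qed

lemma det_permute_rows_and_cols:
  fixes A :: "'a::comm_ring_1 mat"
  assumes A: "A \<in> carrier_mat n n" and p: "p permutes {0..<n}"
  shows "det (mat n n (\<lambda>(i, j). A $$ (p i, p j))) = det A"
proof -
  let ?Y = "mat n n (\<lambda>(i, j). A $$ (p i, j))"
  let ?Z = "mat n n (\<lambda>(i, j). A $$ (p i, p j))"
  have pn: "\<And>i. i < n \<Longrightarrow> p i < n" using p permutes_in_image by fastforce
  have "transpose_mat ?Z = mat n n (\<lambda>(i, j). transpose_mat ?Y $$ (p i, j))"
    by (rule eq_matI) (auto simp: pn)
  hence "det ?Z = det (mat n n (\<lambda>(i, j). transpose_mat ?Y $$ (p i, j)))"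
    using det_transpose[of ?Z n] by simp
  also have "\<dots> = of_int (sign p) * det ?Y"
    using det_permute_rows[of "transpose_mat ?Y" n p] p det_transpose[of ?Y n] by simp
  also have "\<dots> = (of_int (sign p) * of_int (sign p)) * det A"
    using det_permute_rows[OF A p] by (simp add: mult.assoc)
  also have "of_int (sign p) * of_int (sign p) = (1::'a)"
    by (metis of_int_mult sign_idempotent of_int_1)
  finally show ?thesis by simp
qed

definition ones_first_row :: "'a::comm_ring_1 mat \<Rightarrow> 'a mat" where
  "ones_first_row A = mat (dim_row A) (dim_col A) (\<lambda>(i, j). if i = 0 then 1 else A $$ (i, j))"

lemma det_eq_colsum_mult_det_ones_first_row:
  fixes A :: "'a::comm_ring_1 mat"
  assumes A: "A \<in> carrier_mat n n" and n: "n > 0"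
    and colsum: "\<And>j. j < n \<Longrightarrow> (\<Sum>i<n. A $$ (i, j)) = h"
  shows "det A = h * det (ones_first_row A)"
proof -
  define E :: "'a mat" where "E = mat n n (\<lambda>(i, j). if i = 0 \<or> i = j then 1 else 0)"
  have E: "E \<in> carrier_mat n n" unfolding E_def by simp
  have "det E = prod_list (diag_mat E)"
    by (rule det_upper_triangular[OF _ E]) (auto simp: upper_triangular_def E_def)
  also have "diag_mat E = replicate n 1"
    by (rule nth_equalityI) (auto simp: diag_mat_def E_def)
  finally have detE: "det E = 1" by simp
  \<comment> \<open>\<open>E\<close> adds all rows to the first one, which thus becomes the constant \<open>h\<close>.\<close>
  have "E * A = multrow 0 h (ones_first_row A)"
  proof (rule eq_matI)
    fix i j assume "i < dim_row (multrow 0 h (ones_first_row A))"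
      "j < dim_col (multrow 0 h (ones_first_row A))"
    hence i: "i < n" and j: "j < n" using A by (auto simp: ones_first_row_def)
    have "(E * A) $$ (i, j) = (\<Sum>t<n. (if i = 0 \<or> i = t then 1 else 0) * A $$ (t, j))"
      using index_mult_mat_sum[OF E A i j] i by (simp add: E_def)
    also have "\<dots> = (if i = 0 then h else A $$ (i, j))"
      using colsum[OF j] i by (cases "i = 0") (simp_all add: if_distrib[of "\<lambda>x. x * _"] cong: if_cong)
    finally show "(E * A) $$ (i, j) = multrow 0 h (ones_first_row A) $$ (i, j)"
      using A i j by (simp add: mat_multrow_def ones_first_row_def)
  qed (use A E in \<open>auto simp: mat_multrow_def ones_first_row_def\<close>)
  hence "det E * det A = h * det (ones_first_row A)"
    using det_mult[OF E A] det_multrow[OF n, of "ones_first_row A" h] A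
    by (simp add: ones_first_row_def)
  thus ?thesis using detE by simp
qed

lemma det_ones_first_row_sub_rank_one:
  fixes A :: "'a::comm_ring_1 mat"
  assumes A: "A \<in> carrier_mat n n"
  shows "det (ones_first_row (mat n n (\<lambda>(i, j). A $$ (i, j) - v i))) = det (ones_first_row A)"
proof -
  define L :: "'a mat" where
    "L = mat n n (\<lambda>(i, j). if i = j then 1 else if j = 0 then - v i else 0)"
  have L: "L \<in> carrier_mat n n" unfolding L_def by simp
  have X: "ones_first_row A \<in> carrier_mat n n" using A by (simp add: ones_first_row_def)
  have "det L = prod_list (diag_mat L)"
    by (rule det_lower_triangular[OF _ L]) (auto simp: L_def)
  also have "diag_mat L = replicate n 1"
    by (rule nth_equalityI) (auto simp: diag_mat_def L_def)
  finally have detL: "det L = 1" by simp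
  have "ones_first_row (mat n n (\<lambda>(i, j). A $$ (i, j) - v i)) = L * ones_first_row A"
  proof (rule eq_matI)
    fix i j assume "i < dim_row (L * ones_first_row A)" "j < dim_col (L * ones_first_row A)"
    hence i: "i < n" and j: "j < n" using L X by auto
    have "(L * ones_first_row A) $$ (i, j)
        = (\<Sum>t<n. (if t = i then 1 else if t = 0 then - v i else 0) * (if t = 0 then 1 else A $$ (t, j)))"
      unfolding index_mult_mat_sum[OF L X i j] using i j A
      by (intro sum.cong) (auto simp: L_def ones_first_row_def)
    also have "\<dots> = (if i = 0 then 1 else A $$ (i, j) - v i)"
    proof (cases "i = 0")
      case False
      have "(\<Sum>t<n. (if t = i then 1 else if t = 0 then - v i else 0) * (if t = 0 then 1 else A $$ (t, j)))
          = (\<Sum>t<n. (if t = i then A $$ (i, j) else 0) + (if t = 0 then - v i else 0))"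
        using False by (intro sum.cong) auto
      thus ?thesis using False i by (simp add: sum.distrib)
    qed (use i in \<open>simp add: if_distrib cong: if_cong\<close>)
    finally show "ones_first_row (mat n n (\<lambda>(i, j). A $$ (i, j) - v i)) $$ (i, j)
        = (L * ones_first_row A) $$ (i, j)"
      using i j by (simp add: ones_first_row_def)
  qed (use L X in \<open>auto simp: ones_first_row_def\<close>)
  thus ?thesis using det_mult[OF L X] detL by simp
qed

lemma det_sub_rank_one_const_colsum:
  fixes M :: "'a::comm_ring_1 mat"
  assumes M: "M \<in> carrier_mat n n" and n: "n > 0"
    and colsum: "\<And>j. j < n \<Longrightarrow> (\<Sum>i<n. M $$ (i, j)) = g"
  shows "g * det (mat n n (\<lambda>(i, j). M $$ (i, j) - v i)) = (g - (\<Sum>i<n. v i)) * det M"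
proof -
  let ?N = "mat n n (\<lambda>(i, j). M $$ (i, j) - v i)"
  have "(\<Sum>i<n. ?N $$ (i, j)) = g - (\<Sum>i<n. v i)" if "j < n" for j
    using colsum[OF that] that by (simp add: sum_subtractf)
  hence "det ?N = (g - (\<Sum>i<n. v i)) * det (ones_first_row M)"
    using det_eq_colsum_mult_det_ones_first_row[of ?N n, OF _ n] det_ones_first_row_sub_rank_one[OF M]
    by simp
  moreover have "det M = g * det (ones_first_row M)"
    by (rule det_eq_colsum_mult_det_ones_first_row[OF M n colsum])
  ultimately show ?thesis by (simp add: ac_simps)
qed

section \<open>Cyclic shifts plus rank-one matrices\<close>

text \<open>\<open>cyc_shift n k i j\<close> says that the \<open>k\<close>-th power of the cyclic permutation matrix
  \<open>P\<close> (with \<open>P e\<^sub>j = e\<^sub>j\<^sub>+\<^sub>1\<close>, indices mod \<open>n\<close>) has the entry \<open>1\<close> at position \<open>(i, j)\<close>.\<close>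
definition cyc_shift :: "nat \<Rightarrow> int \<Rightarrow> nat \<Rightarrow> nat \<Rightarrow> bool" where
  "cyc_shift n k i j \<longleftrightarrow> int i = (int j + k) mod int n"

lemma cyc_shift_iff_row:
  assumes "n > 0" "i < n" "t < n"
  shows "cyc_shift n k i t \<longleftrightarrow> t = nat ((int i - k) mod int n)"
proof
  assume "cyc_shift n k i t"
  hence "(int i - k) mod int n = ((int t + k) - k) mod int n"
    unfolding cyc_shift_def by (metis mod_diff_left_eq)
  thus "t = nat ((int i - k) mod int n)" using assms by simp
next
  assume "t = nat ((int i - k) mod int n)"
  hence "int t = (int i - k) mod int n" using assms by auto
  hence "(int t + k) mod int n = ((int i - k) + k) mod int n" by (metis mod_add_left_eq)
  thus "cyc_shift n k i t" using assms unfolding cyc_shift_def by simp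
qed

lemma sum_cyc_shift_column:
  assumes "n > 0" "j < n"
  shows "(\<Sum>i<n. if cyc_shift n k i j then f i else 0) = f (nat ((int j + k) mod int n))"
proof -
  have "nat ((int j + k) mod int n) < n" using assms by (simp add: nat_less_iff)
  moreover have "cyc_shift n k i j \<longleftrightarrow> i = nat ((int j + k) mod int n)" for i
    using assms unfolding cyc_shift_def by auto
  ultimately show ?thesis by simp
qed

lemma sum_cyc_shift_row:
  assumes "n > 0" "i < n"
  shows "(\<Sum>t<n. if cyc_shift n k i t then f t else 0) = f (nat ((int i - k) mod int n))"
proof -
  have "nat ((int i - k) mod int n) < n" using assms by (simp add: nat_less_iff)
  moreover have "(\<Sum>t<n. if cyc_shift n k i t then f t else 0)
      = (\<Sum>t<n. if t = nat ((int i - k) mod int n) then f t else 0)"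
    using cyc_shift_iff_row[OF assms] by (intro sum.cong) auto
  ultimately show ?thesis by simp
qed

text \<open>\<open>X = a P\<^sup>k + u \<one>\<^sup>T\<close>; the condition on \<open>u\<close> says that all column sums of \<open>X\<close> are \<open>1\<close>.\<close>
definition shift_rank_one_form :: "nat \<Rightarrow> 'a::comm_ring_1 mat \<Rightarrow> 'a \<Rightarrow> int \<Rightarrow> (nat \<Rightarrow> 'a) \<Rightarrow> bool"
  where "shift_rank_one_form n X a k u \<longleftrightarrow> X \<in> carrier_mat n n \<and>
     (\<forall>i<n. \<forall>j<n. X $$ (i, j) = (if cyc_shift n k i j then a else 0) + u i) \<and>
     (\<Sum>i<n. u i) = 1 - a"

lemma shift_rank_one_form_colsum:
  assumes X: "shift_rank_one_form n X a k u" and n: "n > 0" and j: "j < n"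
  shows "(\<Sum>i<n. X $$ (i, j)) = 1"
proof -
  have "(\<Sum>i<n. X $$ (i, j)) = (\<Sum>i<n. (if cyc_shift n k i j then a else 0) + u i)"
    using X j unfolding shift_rank_one_form_def by (intro sum.cong) auto
  also have "\<dots> = a + (1 - a)"
    using X sum_cyc_shift_column[OF n j, of k "\<lambda>_. a"]
    unfolding shift_rank_one_form_def by (simp add: sum.distrib)
  finally show ?thesis by simp
qed

lemma cyc_shift_add:
  assumes "n > 0"
  shows "cyc_shift n k i (nat ((int j + l) mod int n)) \<longleftrightarrow> cyc_shift n (k + l) i j"
proof -
  have "(int (nat ((int j + l) mod int n)) + k) mod int n = ((int j + l) mod int n + k) mod int n"
    using assms by simp
  also have "\<dots> = (int j + (k + l)) mod int n" by (metis mod_add_left_eq add.assoc add.commute)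
  finally show ?thesis unfolding cyc_shift_def by simp
qed

text \<open>\<open>(a P\<^sup>k + u \<one>\<^sup>T)(b P\<^sup>l + v \<one>\<^sup>T) = a b P\<^sup>k\<^sup>+\<^sup>l + (a P\<^sup>k v + u) \<one>\<^sup>T\<close>, using
  \<open>\<one>\<^sup>T (b P\<^sup>l + v \<one>\<^sup>T) = \<one>\<^sup>T\<close>.\<close>
lemma index_mult_shift_rank_one_form:
  assumes X: "shift_rank_one_form n X a k u" and Y: "shift_rank_one_form n Y b l v"
    and n: "n > 0" and i: "i < n" and j: "j < n"
  shows "(X * Y) $$ (i, j) =
    (if cyc_shift n (k + l) i j then a * b else 0) + (a * v (nat ((int i - k) mod int n)) + u i)"
proof -
  let ?A = "\<lambda>t. if cyc_shift n k i t then a else 0"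
  let ?B = "\<lambda>t. if cyc_shift n l t j then b else 0"
  have Xc: "X \<in> carrier_mat n n" and Yc: "Y \<in> carrier_mat n n"
    using X Y unfolding shift_rank_one_form_def by auto
  have "(X * Y) $$ (i, j) = (\<Sum>t<n. (?A t + u i) * (?B t + v t))"
    unfolding index_mult_mat_sum[OF Xc Yc i j] using X Y i j
    unfolding shift_rank_one_form_def by (intro sum.cong) auto
  also have "\<dots> = (\<Sum>t<n. if cyc_shift n l t j then ?A t * b else 0)
      + (\<Sum>t<n. if cyc_shift n k i t then a * v t else 0)
      + u i * (\<Sum>t<n. if cyc_shift n l t j then b else 0) + u i * (\<Sum>t<n. v t)"
  proof -
    have "(?A t + u i) * (?B t + v t) = (if cyc_shift n l t j then ?A t * b else 0)
        + (if cyc_shift n k i t then a * v t else 0)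
        + u i * (if cyc_shift n l t j then b else 0) + u i * v t" for t
      by (simp add: algebra_simps)
    thus ?thesis by (simp add: sum.distrib sum_distrib_left)
  qed
  also have "\<dots> = ?A (nat ((int j + l) mod int n)) * b + a * v (nat ((int i - k) mod int n))
      + u i * (b + (\<Sum>t<n. v t))"
    using sum_cyc_shift_column[OF n j, of l "\<lambda>t. ?A t * b"] sum_cyc_shift_column[OF n j, of l "\<lambda>t. b"]
      sum_cyc_shift_row[OF n i, of k "\<lambda>t. a * v t"] by (simp add: algebra_simps)
  also have "b + (\<Sum>t<n. v t) = 1" using Y unfolding shift_rank_one_form_def by simp
  finally show ?thesis using cyc_shift_add[OF n] by simp
qed

lemma shift_rank_one_form_mult:
  assumes X: "shift_rank_one_form n X a k u" and Y: "shift_rank_one_form n Y b l v"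
    and n: "n > 0"
  shows "shift_rank_one_form n (X * Y) (a * b) (k + l)
           (\<lambda>i. a * v (nat ((int i - k) mod int n)) + u i)"
proof -
  let ?w = "\<lambda>i. a * v (nat ((int i - k) mod int n)) + u i"
  note entry = index_mult_shift_rank_one_form[OF X Y n]
  have Xc: "X \<in> carrier_mat n n" and Yc: "Y \<in> carrier_mat n n"
    using X Y unfolding shift_rank_one_form_def by auto
  have "(\<Sum>i<n. (X * Y) $$ (i, 0)) = 1"
    using sum_column_mult_mat[OF Xc Yc n shift_rank_one_form_colsum[OF X n]]
      shift_rank_one_form_colsum[OF Y n n] by simp
  moreover have "(\<Sum>i<n. (X * Y) $$ (i, 0)) = a * b + (\<Sum>i<n. ?w i)"
    using entry n sum_cyc_shift_column[OF n n, of "k + l" "\<lambda>_. a * b"] by (simp add: sum.distrib)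
  ultimately have "(\<Sum>i<n. ?w i) = 1 - a * b" by (simp add: algebra_simps)
  thus ?thesis unfolding shift_rank_one_form_def using entry Xc Yc by auto
qed

lemma shift_rank_one_form_one:
  "shift_rank_one_form n (1\<^sub>m n :: 'a::comm_ring_1 mat) 1 0 (\<lambda>_. 0)"
  unfolding shift_rank_one_form_def cyc_shift_def by auto

lemma shift_rank_one_form_pow:
  assumes X: "shift_rank_one_form n X a k u" and n: "n > 0"
  shows "\<exists>w. shift_rank_one_form n (X ^\<^sub>m N) (a ^ N) (int N * k) w"
proof (induction N)
  case 0
  have "X \<in> carrier_mat n n" using X unfolding shift_rank_one_form_def by simp
  thus ?case using shift_rank_one_form_one by auto
next
  case (Suc N)
  then obtain w where "shift_rank_one_form n (X ^\<^sub>m N) (a ^ N) (int N * k) w" by blast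
  from shift_rank_one_form_mult[OF this X n] show ?case by (auto simp: algebra_simps)
qed

section \<open>Burau matrices of powers of \<open>\<sigma>\<^sub>1 \<cdots> \<sigma>\<^sub>n\<^sub>-\<^sub>1\<close>\<close>

lemma burau_gen_carrier: "burau_gen n q i \<in> carrier_mat n n"
  unfolding burau_gen_def by simp

lemma burau_gen_inv_carrier: "burau_gen_inv n q i \<in> carrier_mat n n"
  unfolding burau_gen_inv_def by simp

lemma index_burau_gen_mult:
  assumes i: "1 \<le> i" "i < n" and X: "X \<in> carrier_mat n n" and r: "r < n" and c: "c < n"
  shows "(burau_gen n q i * X) $$ (r, c) =
    (if r = i - 1 then (1 - q) * X $$ (i - 1, c) + X $$ (i, c)
     else if r = i then q * X $$ (i - 1, c) else X $$ (r, c))"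
proof -
  have "(burau_gen n q i * X) $$ (r, c) =
     (\<Sum>t<n. (if t = i - 1 then (if r = i - 1 then 1 - q else if r = i then q else 0) * X $$ (i - 1, c) else 0)
     + (if t = i then (if r = i - 1 then 1 else 0) * X $$ (i, c) else 0)
     + (if t = r \<and> r \<noteq> i - 1 \<and> r \<noteq> i then X $$ (r, c) else 0))"
    unfolding index_mult_mat_sum[OF burau_gen_carrier X r c]
    using i r by (intro sum.cong) (auto simp: burau_gen_def)
  also have "\<dots> = (if r = i - 1 then 1 - q else if r = i then q else 0) * X $$ (i - 1, c)
     + (if r = i - 1 then 1 else 0) * X $$ (i, c) + (if r \<noteq> i - 1 \<and> r \<noteq> i then X $$ (r, c) else 0)"
    using i r by (simp add: sum.distrib less_imp_diff_less)
  finally show ?thesis by auto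
qed

lemma index_burau_gen_inv_mult:
  assumes i: "1 \<le> i" "i < n" and X: "X \<in> carrier_mat n n" and r: "r < n" and c: "c < n"
  shows "(burau_gen_inv n q i * X) $$ (r, c) =
    (if r = i - 1 then inverse q * X $$ (i, c)
     else if r = i then X $$ (i - 1, c) + (1 - inverse q) * X $$ (i, c) else X $$ (r, c))"
proof -
  have "(burau_gen_inv n q i * X) $$ (r, c) =
     (\<Sum>t<n. (if t = i - 1 then (if r = i then 1 else 0) * X $$ (i - 1, c) else 0)
     + (if t = i then (if r = i - 1 then inverse q else if r = i then 1 - inverse q else 0) * X $$ (i, c) else 0)
     + (if t = r \<and> r \<noteq> i - 1 \<and> r \<noteq> i then X $$ (r, c) else 0))"
    unfolding index_mult_mat_sum[OF burau_gen_inv_carrier X r c]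
    using i r by (intro sum.cong) (auto simp: burau_gen_inv_def)
  also have "\<dots> = (if r = i then 1 else 0) * X $$ (i - 1, c)
     + (if r = i - 1 then inverse q else if r = i then 1 - inverse q else 0) * X $$ (i, c)
     + (if r \<noteq> i - 1 \<and> r \<noteq> i then X $$ (r, c) else 0)"
    using i r by (simp add: sum.distrib less_imp_diff_less)
  finally show ?thesis using i by auto
qed

text \<open>Closed form of \<open>\<beta>(\<sigma>\<^sub>j \<sigma>\<^sub>j\<^sub>+\<^sub>1 \<cdots> \<sigma>\<^sub>n\<^sub>-\<^sub>1)\<close>.\<close>
definition burau_tail_prod :: "nat \<Rightarrow> 'a::field \<Rightarrow> nat \<Rightarrow> 'a mat" where
  "burau_tail_prod n q j = mat n n (\<lambda>(r, c).
     if c + 1 < j then (if r = c then 1 else 0)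
     else if c = n - 1 then (if r = j - 1 then 1 else 0)
     else (if r = j - 1 then 1 - q else 0) + (if r = c + 1 then q else 0))"

lemma foldr_burau_gen_eq_tail_prod:
  "1 \<le> j \<Longrightarrow> j \<le> n \<Longrightarrow> foldr (\<lambda>i A. burau_gen n q i * A) [j..<n] (1\<^sub>m n) = burau_tail_prod n q j"
proof (induction "n - j" arbitrary: j)
  case 0
  hence "j = n" by simp
  thus ?case by (intro eq_matI) (auto simp: burau_tail_prod_def)
next
  case (Suc d)
  hence j: "j < n" "1 \<le> j"
    and IH: "foldr (\<lambda>i A. burau_gen n q i * A) [Suc j..<n] (1\<^sub>m n) = burau_tail_prod n q (Suc j)"
    by auto
  have F: "burau_tail_prod n q (Suc j) \<in> carrier_mat n n" by (simp add: burau_tail_prod_def)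
  have "foldr (\<lambda>i A. burau_gen n q i * A) [j..<n] (1\<^sub>m n) = burau_gen n q j * burau_tail_prod n q (Suc j)"
    using j IH by (simp add: upt_conv_Cons)
  also have "\<dots> = burau_tail_prod n q j"
  proof (rule eq_matI)
    fix r c assume "r < dim_row (burau_tail_prod n q j)" "c < dim_col (burau_tail_prod n q j)"
    hence r: "r < n" and c: "c < n" by (auto simp: burau_tail_prod_def)
    show "(burau_gen n q j * burau_tail_prod n q (Suc j)) $$ (r, c) = burau_tail_prod n q j $$ (r, c)"
      unfolding index_burau_gen_mult[OF j(2) j(1) F r c] using j r c
      by (auto simp: burau_tail_prod_def)
  qed (auto simp: burau_tail_prod_def burau_gen_def)
  finally show ?case .
qed

text \<open>Closed form of \<open>\<beta>(\<sigma>\<^sub>j\<^sub>-\<^sub>1\<^sup>-\<^sup>1 \<cdots> \<sigma>\<^sub>1\<^sup>-\<^sup>1)\<close>.\<close>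
definition burau_inv_head_prod :: "nat \<Rightarrow> 'a::field \<Rightarrow> nat \<Rightarrow> 'a mat" where
  "burau_inv_head_prod n q j = mat n n (\<lambda>(r, c).
     if c = 0 then (if r = j - 1 then 1 else 0)
     else if c < j then (if r = c - 1 then inverse q else 0) + (if r = j - 1 then 1 - inverse q else 0)
     else (if r = c then 1 else 0))"

lemma foldr_burau_gen_inv_eq_inv_head_prod:
  "1 \<le> j \<Longrightarrow> j \<le> n \<Longrightarrow>
    foldr (\<lambda>i A. burau_gen_inv n q i * A) (rev [1..<j]) (1\<^sub>m n) = burau_inv_head_prod n q j"
proof (induction j rule: nat_induct_at_least)
  case base
  show ?case by (intro eq_matI) (auto simp: burau_inv_head_prod_def)
next
  case (Suc j)
  hence j: "j < n" "1 \<le> j"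
    and IH: "foldr (\<lambda>i A. burau_gen_inv n q i * A) (rev [1..<j]) (1\<^sub>m n) = burau_inv_head_prod n q j"
    by auto
  have H: "burau_inv_head_prod n q j \<in> carrier_mat n n" by (simp add: burau_inv_head_prod_def)
  have "foldr (\<lambda>i A. burau_gen_inv n q i * A) (rev [1..<Suc j]) (1\<^sub>m n)
      = burau_gen_inv n q j * burau_inv_head_prod n q j"
    using j IH by simp
  also have "\<dots> = burau_inv_head_prod n q (Suc j)"
  proof (rule eq_matI)
    fix r c assume "r < dim_row (burau_inv_head_prod n q (Suc j))"
      "c < dim_col (burau_inv_head_prod n q (Suc j))"
    hence r: "r < n" and c: "c < n" by (auto simp: burau_inv_head_prod_def)
    show "(burau_gen_inv n q j * burau_inv_head_prod n q j) $$ (r, c)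
        = burau_inv_head_prod n q (Suc j) $$ (r, c)"
      unfolding index_burau_gen_inv_mult[OF j(2) j(1) H r c] using j r c
      by (auto simp: burau_inv_head_prod_def)
  qed (auto simp: burau_inv_head_prod_def burau_gen_inv_def)
  finally show ?case .
qed

lemma int_add_one_mod:
  "c < n \<Longrightarrow> (int c + 1) mod int n = (if c = n - 1 then 0 else int c + 1)"
  by (cases "c = n - 1") auto

lemma int_diff_one_mod:
  "c < n \<Longrightarrow> (int c - 1) mod int n = (if c = 0 then int n - 1 else int c - 1)"
  by (cases "c = 0") (simp_all add: zmod_minus1)

lemma burau_delta_shift_rank_one_form:
  assumes "n \<ge> 2"
  shows "shift_rank_one_form n (burau_delta n q) q 1 (\<lambda>r. if r = 0 then 1 - q else 0)"
proof -
  have "burau_delta n q = burau_tail_prod n q 1"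
    unfolding burau_delta_def using assms by (intro foldr_burau_gen_eq_tail_prod) auto
  thus ?thesis
    using assms unfolding shift_rank_one_form_def
    by (auto simp: burau_tail_prod_def cyc_shift_def int_add_one_mod)
qed

lemma burau_delta_inv_shift_rank_one_form:
  assumes "n \<ge> 2"
  shows "shift_rank_one_form n (burau_delta_inv n q) (inverse q) (-1)
           (\<lambda>r. if r = n - 1 then 1 - inverse q else 0)"
proof -
  have "burau_delta_inv n q = burau_inv_head_prod n q n"
    unfolding burau_delta_inv_def using assms by (intro foldr_burau_gen_inv_eq_inv_head_prod) auto
  thus ?thesis
    using assms unfolding shift_rank_one_form_def
    by (auto simp: burau_inv_head_prod_def cyc_shift_def int_diff_one_mod)
qed

lemma burau_sigma_shift_rank_one_form:
  assumes "n \<ge> 2"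
  shows "\<exists>u. shift_rank_one_form n (burau_sigma n m q) (q powi m) m u"
proof (cases "0 \<le> m")
  case True
  obtain u where "shift_rank_one_form n (burau_delta n q ^\<^sub>m nat m) (q ^ nat m) (int (nat m) * 1) u"
    using shift_rank_one_form_pow[OF burau_delta_shift_rank_one_form[OF assms]] assms by fastforce
  thus ?thesis using True unfolding burau_sigma_def power_int_def by auto
next
  case False
  obtain u where "shift_rank_one_form n (burau_delta_inv n q ^\<^sub>m nat (- m))
      (inverse q ^ nat (- m)) (int (nat (- m)) * (- 1)) u"
    using shift_rank_one_form_pow[OF burau_delta_inv_shift_rank_one_form[OF assms]] assms by fastforce
  thus ?thesis using False unfolding burau_sigma_def power_int_def by auto
qed

section \<open>The zeta function\<close>

definition one_minus_shift :: "nat \<Rightarrow> 'a::comm_ring_1 \<Rightarrow> int \<Rightarrow> 'a mat" where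
  "one_minus_shift n t k =
     mat n n (\<lambda>(i, j). (if i = j then 1 else 0) - (if cyc_shift n k i j then t else 0))"

lemma mult_mod_permutes:
  assumes n: "n > 0" and k: "coprime k (int n)"
  shows "(\<lambda>i. if i < n then nat ((k * int i) mod int n) else i) permutes {0..<n}"
    (is "?\<sigma> permutes _")
proof -
  have "inj_on ?\<sigma> {0..<n}"
  proof (rule inj_onI)
    fix i j assume "i \<in> {0..<n}" "j \<in> {0..<n}" "?\<sigma> i = ?\<sigma> j"
    hence "[k * int i = k * int j] (mod int n)" and "i < n" "j < n"
      using n by (auto simp: cong_def eq_nat_nat_iff)
    thus "i = j" using cong_mult_lcancel[OF k] by (simp add: cong_def)
  qed
  moreover have "?\<sigma> ` {0..<n} \<subseteq> {0..<n}" using n by (auto simp: nat_less_iff)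
  ultimately have "?\<sigma> ` {0..<n} = {0..<n}" by (intro endo_inj_surj) auto
  with \<open>inj_on ?\<sigma> {0..<n}\<close> show ?thesis
    by (intro bij_imp_permutes) (auto simp: bij_betw_def)
qed

text \<open>Relabelling \<open>i \<mapsto> k i mod n\<close> conjugates \<open>P\<close> to \<open>P\<^sup>k\<close>.\<close>
lemma det_one_minus_shift_coprime:
  assumes n: "n > 0" and k: "coprime k (int n)"
  shows "det (one_minus_shift n t k) = det (one_minus_shift n t 1)"
proof -
  define \<sigma> where "\<sigma> i = (if i < n then nat ((k * int i) mod int n) else i)" for i
  have perm: "\<sigma> permutes {0..<n}"
    using mult_mod_permutes[OF n k] unfolding \<sigma>_def[abs_def] .
  have \<sigma>: "\<sigma> i < n" "int (\<sigma> i) = (k * int i) mod int n" if "i < n" for i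
    using that n unfolding \<sigma>_def by (simp_all add: nat_less_iff)
  have shift: "cyc_shift n k (\<sigma> i) (\<sigma> j) \<longleftrightarrow> cyc_shift n 1 i j" if i: "i < n" and j: "j < n" for i j
  proof -
    have "((k * int j) mod int n + k) mod int n = (k * (int j + 1)) mod int n"
      by (metis mod_add_left_eq distrib_left mult.right_neutral)
    hence "cyc_shift n k (\<sigma> i) (\<sigma> j) \<longleftrightarrow> [k * int i = k * (int j + 1)] (mod int n)"
      unfolding cyc_shift_def cong_def using \<sigma> i j by simp
    also have "\<dots> \<longleftrightarrow> cyc_shift n 1 i j"
      using cong_mult_lcancel[OF k] i unfolding cyc_shift_def cong_def by simp
    finally show ?thesis .
  qed
  have "mat n n (\<lambda>(i, j). one_minus_shift n t k $$ (\<sigma> i, \<sigma> j)) = one_minus_shift n t 1"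
  proof (rule eq_matI)
    fix i j assume "i < dim_row (one_minus_shift n t 1)" "j < dim_col (one_minus_shift n t 1)"
    hence i: "i < n" and j: "j < n" by (auto simp: one_minus_shift_def)
    have "\<sigma> i = \<sigma> j \<longleftrightarrow> i = j" using permutes_inj[OF perm] by (auto dest: injD)
    thus "mat n n (\<lambda>(i, j). one_minus_shift n t k $$ (\<sigma> i, \<sigma> j)) $$ (i, j) = one_minus_shift n t 1 $$ (i, j)"
      using i j \<sigma>(1)[OF i] \<sigma>(1)[OF j] shift[OF i j] by (simp add: one_minus_shift_def)
  qed (auto simp: one_minus_shift_def)
  moreover have "det (mat n n (\<lambda>(i, j). one_minus_shift n t k $$ (\<sigma> i, \<sigma> j))) = det (one_minus_shift n t k)"
    by (rule det_permute_rows_and_cols[OF _ perm]) (simp add: one_minus_shift_def)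
  ultimately show ?thesis by simp
qed

lemma sum_pCons_0: "(\<Sum>i\<in>A. [:0, f i:]) = [:0, \<Sum>i\<in>A. f i:]"
  by (induction A rule: infinite_finite_induct) auto

lemma det_one_minus_scaled_shift_rank_one_form:
  fixes B :: "'a::field mat"
  assumes B: "shift_rank_one_form n B a k u" and n: "n > 0"
  shows "[:1, - (c * a):] * det (1\<^sub>m n - map_mat (\<lambda>x. [:0, c * x:]) B)
       = [:1, - c:] * det (one_minus_shift n [:0, c * a:] k)"
proof -
  let ?M = "one_minus_shift n [:0, c * a:] k"
  have Bc: "B \<in> carrier_mat n n"
    and B_entry: "\<And>i j. i < n \<Longrightarrow> j < n \<Longrightarrow> B $$ (i, j) = (if cyc_shift n k i j then a else 0) + u i"
    and u: "(\<Sum>i<n. u i) = 1 - a"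
    using B unfolding shift_rank_one_form_def by auto
  have M: "?M \<in> carrier_mat n n" unfolding one_minus_shift_def by simp
  have colsum: "(\<Sum>i<n. ?M $$ (i, j)) = [:1, - (c * a):]" if j: "j < n" for j
  proof -
    have "(\<Sum>i<n. ?M $$ (i, j))
        = (\<Sum>i<n. (if i = j then 1 else 0) - (if cyc_shift n k i j then [:0, c * a:] else 0))"
      using j by (intro sum.cong) (auto simp: one_minus_shift_def)
    also have "\<dots> = 1 - [:0, c * a:]"
      using j sum_cyc_shift_column[OF n j, of k "\<lambda>_. [:0, c * a:]"] by (simp add: sum_subtractf)
    finally show ?thesis by (simp add: one_pCons)
  qed
  have "1\<^sub>m n - map_mat (\<lambda>x. [:0, c * x:]) B = mat n n (\<lambda>(i, j). ?M $$ (i, j) - [:0, c * u i:])"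
  proof (rule eq_matI)
    fix i j assume "i < dim_row (mat n n (\<lambda>(i, j). ?M $$ (i, j) - [:0, c * u i:]))"
      "j < dim_col (mat n n (\<lambda>(i, j). ?M $$ (i, j) - [:0, c * u i:]))"
    hence i: "i < n" and j: "j < n" by auto
    have "[:0, c * ((if cyc_shift n k i j then a else 0) + u i):]
        = (if cyc_shift n k i j then [:0, c * a:] else 0) + [:0, c * u i:]"
      by (auto simp: algebra_simps)
    thus "(1\<^sub>m n - map_mat (\<lambda>x. [:0, c * x:]) B) $$ (i, j)
        = mat n n (\<lambda>(i, j). ?M $$ (i, j) - [:0, c * u i:]) $$ (i, j)"
      using i j Bc B_entry[OF i j] by (simp add: one_minus_shift_def)
  qed (use Bc in auto)
  moreover have "[:1, - (c * a):] - (\<Sum>i<n. [:0, c * u i:]) = [:1, - c:]"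
    unfolding sum_pCons_0 sum_distrib_left[symmetric] u by (simp add: algebra_simps)
  ultimately show ?thesis
    using det_sub_rank_one_const_colsum[OF M n colsum, of "\<lambda>i. [:0, c * u i:]"] by simp
qed

lemma det_one_minus_scaled_burau_sigma:
  fixes q c :: "'a::field"
  assumes n: "n \<ge> 2" and m: "coprime m (int n)"
  shows "[:1, - (c * q powi m):] * det (1\<^sub>m n - map_mat (\<lambda>x. [:0, c * x:]) (burau_sigma n m q))
       = [:1, - c:] * det (one_minus_shift n [:0, c * q powi m:] 1)"
proof -
  have "n > 0" using n by simp
  obtain u where "shift_rank_one_form n (burau_sigma n m q) (q powi m) m u"
    using burau_sigma_shift_rank_one_form[OF n] by blast
  from det_one_minus_scaled_shift_rank_one_form[OF this \<open>n > 0\<close>, of c] show ?thesis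
    unfolding det_one_minus_shift_coprime[OF \<open>n > 0\<close> m] .
qed

text \<open>If \<open>\<Delta> = 0\<close>, then \<open>D\<^sub>1 = D\<^sub>2 = 0\<close> and both sides are \<open>0\<close> since \<open>inverse 0 = 0\<close>.\<close>
lemma mult_inverse_eq_of_common_multiple:
  fixes G a b D\<^sub>1 D\<^sub>2 \<Delta> :: "'a::field"
  assumes "G \<noteq> 0" "a \<noteq> 0" "b \<noteq> 0" "G * D\<^sub>1 = a * \<Delta>" "G * D\<^sub>2 = b * \<Delta>"
  shows "a * inverse D\<^sub>1 = b * inverse D\<^sub>2"
proof (cases "\<Delta> = 0")
  case False
  have "a * inverse D\<^sub>1 = G / \<Delta>" if "G * D\<^sub>1 = a * \<Delta>" "a \<noteq> 0" for a D\<^sub>1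
  proof -
    have "D\<^sub>1 = a * \<Delta> / G" using that \<open>G \<noteq> 0\<close> by (simp add: field_simps)
    thus ?thesis using that False \<open>G \<noteq> 0\<close> by (simp add: inverse_eq_divide)
  qed
  thus ?thesis using assms by metis
qed (use assms in simp)

theorem corollary3p2:
  fixes n :: nat and m m' :: int
  assumes "n \<ge> 2"
    and "gcd (int n) m = 1"
    and "gcd (int n) (m + m') = 1"
  shows "to_fract [:1, -1:] * burau_zeta n (m + m') burau_q 1
       = to_fract [:1, - (burau_q powi m'):] * burau_zeta n m burau_q (burau_q powi m')"
proof -
  let ?q = burau_q and ?c = "burau_q powi m'"
  let ?T = "?q powi (m + m')"
  have cT: "?c * ?q powi m = ?T"
    by (simp add: burau_q_def power_int_add mult.commute)
  have m_coprime: "coprime m (int n)" and m_m'_coprime: "coprime (m + m') (int n)"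
    using assms(2,3) by (simp_all add: coprime_iff_gcd_eq_1 gcd.commute)
  define \<Delta> where "\<Delta> = det (one_minus_shift n [:0, ?T:] 1)"
  have "[:1, - ?T:] * det (1\<^sub>m n - map_mat (\<lambda>x. [:0, 1 * x:]) (burau_sigma n (m + m') ?q))
      = [:1, -1:] * \<Delta>"
    using det_one_minus_scaled_burau_sigma[OF assms(1) m_m'_coprime, where q = ?q and c = 1] unfolding \<Delta>_def by simp
  note e\<^sub>1 = arg_cong[OF this, of to_fract, unfolded to_fract_mult]
  have "[:1, - ?T:] * det (1\<^sub>m n - map_mat (\<lambda>x. [:0, ?c * x:]) (burau_sigma n m ?q))
      = [:1, - ?c:] * \<Delta>"
    using det_one_minus_scaled_burau_sigma[OF assms(1) m_coprime, where q = ?q and c = ?c] unfolding \<Delta>_def cT .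
  note e\<^sub>2 = arg_cong[OF this, of to_fract, unfolded to_fract_mult]
  show ?thesis
    unfolding burau_zeta_def
    by (rule mult_inverse_eq_of_common_multiple[OF _ _ _ e\<^sub>1 e\<^sub>2]) simp_all
qed

end
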